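(* Let $\beta>0$, $\beta_a>0$, $\alpha>0$. Consider the system \[ \begin{aligned} \dot s_a&=-\beta s_a i, & \dot s_r&=-\beta s_r i,\\ \dot i_a&=\beta s_a i-\beta_a s_a i_a-\alpha i_a, & \dot i_r&=\beta s_r i-\beta_a s_a i_r-\alpha i_r,\\ \dot r&=\beta_a s_a i+\alpha i, && \end{aligned} \] where $i=i_a+i_r$, with initial conditions $(s_a(0),s_r(0),i_a(0),i_r(0))=(s_{a0},s_{r0},i_{a0},i_{r0})\in[0,1]^4$ satisfying $s_{a0}+s_{r0}+i_{a0}+i_{r0}=1$ and $r(0)=0$. Let $i_0=i_{a0}+i_{r0}$ and $s_0=s_{a0}+s_{r0}=1-i_0$. Then the peak infection level $i_{\mathrm{pk}}\triangleq\max_{t\ge 0} i(t)$ satisfies \[ i_{\mathrm{pk}}=\begin{cases} 1-\dfrac{\alpha}{\beta}-\dfrac{\beta_a}{\beta}s_{a0}+\dfrac{\alpha}{\beta}\log\dfrac{\alpha}{\beta s_0-\beta_a s_{a0}}, & \text{if } s_{a0}<\dfrac{\beta s_0-\alpha}{\beta_a},\\[3mm] i_0, & \text{if } s_{a0}\ge \dfrac{\beta s_0-\alpha}{\beta_a}. \end{cases} \]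
   Context: This is the A-SIR active cyber defense model: $s_a,s_r$ are the fractions of susceptible active-defender and susceptible non-active nodes, $i_a,i_r$ the fractions of infected active-defender and infected non-active nodes, and $r$ the fraction of permanently protected (recovered) nodes; $\beta$ is the infection rate, $\beta_a$ the active clean-up rate, $\alpha$ the reactive recovery rate. *)

theory Defs
  imports "HOL-Analysis.Analysis"
begin

end

theory Submission
  imports Defs
begin

(* With i = i_a + i_r, both susceptible classes are depleted at the common rate beta i, so
   s_a = s_a0 E and s_r = s_r0 E with E = exp (- beta * integral of i), and i' = (K E - alpha) i
   with K = beta s_0 - beta_a s_a0.  As 0 < E <= 1, for K <= alpha the infection never grows and
   the peak is i_0.  Otherwise i + (K E - alpha ln E) / beta is conserved, and alpha ln e - K e is
   maximal at e = alpha / K, which bounds i by the stated peak.  The bound is attained because E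
   falls to alpha / K: as long as E > alpha / K, i stays above i_0, so E decays exponentially. *)

lemma integral_has_real_derivative_atLeast:
  fixes f :: "real \<Rightarrow> real"
  assumes "continuous_on {a..} f" and "a \<le> t"
  shows "((\<lambda>x. integral {a..x} f) has_real_derivative f t) (at t within {a..})"
proof -
  have "continuous_on {a..t + 1} f"
    using assms(1) by (rule continuous_on_subset) auto
  then have "((\<lambda>x. integral {a..x} f) has_real_derivative f t) (at t within {a..t + 1})"
    using assms(2) by (intro integral_has_real_derivative) auto
  moreover have "at t within {a..t + 1} = at t within {a..}"
    by (rule at_within_nhd[of _ "{..<t + 1}"]) auto
  ultimately show ?thesis by simp
qed

lemma linear_ode_solution:
  fixes y k :: "real \<Rightarrow> real"
  assumes y': "\<And>t. t \<ge> t\<^sub>0 \<Longrightarrow> (y has_real_derivative k t * y t) (at t within {t\<^sub>0..})"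
    and "continuous_on {t\<^sub>0..} k" and "t \<ge> t\<^sub>0"
  shows "y t = y t\<^sub>0 * exp (integral {t\<^sub>0..t} k)"
proof -
  define A where "A u = integral {t\<^sub>0..u} k" for u
  have "((\<lambda>u. y u * exp (- A u)) has_real_derivative 0) (at u within {t\<^sub>0..})"
    if "u \<in> {t\<^sub>0..}" for u
  proof -
    have "(A has_real_derivative k u) (at u within {t\<^sub>0..})"
      unfolding A_def using assms(2) that by (intro integral_has_real_derivative_atLeast) auto
    then have "((\<lambda>u. exp (- A u)) has_real_derivative exp (- A u) * - k u) (at u within {t\<^sub>0..})"
      by (rule DERIV_chain2[OF DERIV_exp DERIV_minus])
    from DERIV_mult[OF y' this] that show ?thesis
      by (simp add: algebra_simps)
  qed
  then obtain c where "\<forall>u\<in>{t\<^sub>0..}. y u * exp (- A u) = c"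
    using has_field_derivative_zero_constant[OF convex_real_interval(1)] by blast
  then have "y t * exp (- A t) = y t\<^sub>0 * exp (- A t\<^sub>0)"
    using assms(3) by simp
  then have "y t * exp (- A t) = y t\<^sub>0"
    by (simp add: A_def)
  then show ?thesis
    unfolding A_def by (metis exp_minus_inverse mult.assoc mult.right_neutral)
qed

lemma ln_minus_linear_le:
  fixes \<alpha> K x :: real
  assumes "\<alpha> > 0" "K > 0" "x > 0"
  shows "\<alpha> * ln x - K * x \<le> \<alpha> * ln (\<alpha> / K) - \<alpha>"
proof -
  have "ln (K * x / \<alpha>) \<le> K * x / \<alpha> - 1"
    using assms by (intro ln_le_minus_one) simp
  moreover have "ln (K * x / \<alpha>) = ln x - ln (\<alpha> / K)"
    using assms by (simp add: ln_div ln_mult)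
  ultimately have "\<alpha> * (ln x - ln (\<alpha> / K)) \<le> \<alpha> * (K * x / \<alpha> - 1)"
    using assms(1) by (intro mult_left_mono) auto
  then show ?thesis
    using assms(1) by (simp add: algebra_simps)
qed

locale infection_escape_system =
  fixes \<beta> \<alpha> K :: real and i E :: "real \<Rightarrow> real"
  assumes \<beta>_pos: "\<beta> > 0" and \<alpha>_pos: "\<alpha> > 0"
    and i_0_pos: "i 0 > 0" and E_0: "E 0 = 1"
    and E_deriv: "\<And>t. t \<ge> 0 \<Longrightarrow> (E has_real_derivative - \<beta> * i t * E t) (at t within {0..})"
    and i_deriv: "\<And>t. t \<ge> 0 \<Longrightarrow> (i has_real_derivative (K * E t - \<alpha>) * i t) (at t within {0..})"
begin

lemma continuous_on_i: "continuous_on {0..} i"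
  using i_deriv by (intro DERIV_continuous_on) auto

lemma continuous_on_E: "continuous_on {0..} E"
  using E_deriv by (intro DERIV_continuous_on) auto

lemma i_eq_exp_integral: "t \<ge> 0 \<Longrightarrow> i t = i 0 * exp (integral {0..t} (\<lambda>u. K * E u - \<alpha>))"
  using i_deriv continuous_on_E
  by (intro linear_ode_solution) (auto intro!: continuous_intros)

lemma E_eq_exp_integral:
  assumes "t \<ge> 0"
  shows "E t = exp (- \<beta> * integral {0..t} i)"
proof -
  have "continuous_on {0..} (\<lambda>u. - \<beta> * i u)"
    by (intro continuous_intros continuous_on_i)
  from linear_ode_solution[OF E_deriv this assms]
  have "E t = exp (integral {0..t} (\<lambda>u. - \<beta> * i u))"
    using E_0 by simp
  then show ?thesis
    by (simp add: integral_mult_right)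
qed

lemma i_pos:
  assumes "t \<ge> 0"
  shows "i t > 0"
  unfolding i_eq_exp_integral[OF assms] using i_0_pos by simp

lemma E_pos: "t \<ge> 0 \<Longrightarrow> E t > 0"
  using E_eq_exp_integral by simp

lemma E_le_exp:
  assumes "t \<ge> 0" and "\<And>u. u \<in> {0..t} \<Longrightarrow> c \<le> i u"
  shows "E t \<le> exp (- \<beta> * c * t)"
proof -
  have "continuous_on {0..t} i"
    using continuous_on_i by (rule continuous_on_subset) auto
  then have "integral {0..t} (\<lambda>u. - \<beta> * i u) \<le> integral {0..t} (\<lambda>u. - \<beta> * c)"
    using assms(2) \<beta>_pos
    by (intro integral_le integrable_continuous_interval continuous_intros) auto
  then have "- \<beta> * integral {0..t} i \<le> - \<beta> * c * t"
    using assms(1) by (simp add: integral_mult_right mult.commute mult.left_commute)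
  then show ?thesis
    unfolding E_eq_exp_integral[OF assms(1)] by simp
qed

lemma E_le_1:
  assumes "t \<ge> 0"
  shows "E t \<le> 1"
proof -
  have "E t \<le> exp (- \<beta> * 0 * t)"
    using assms i_pos by (intro E_le_exp) (auto intro: less_imp_le)
  then show ?thesis
    by simp
qed

lemma i_le_i_0:
  assumes "t \<ge> 0" and "\<And>u. u \<in> {0..t} \<Longrightarrow> K * E u \<le> \<alpha>"
  shows "i t \<le> i 0"
proof -
  have "integral {0..t} (\<lambda>u. K * E u - \<alpha>) \<le> integral {0..t} (\<lambda>u. 0)"
    using assms(2) continuous_on_subset[OF continuous_on_E, of "{0..t}"]
    by (intro integral_le integrable_continuous_interval continuous_intros) auto
  then have "exp (integral {0..t} (\<lambda>u. K * E u - \<alpha>)) \<le> 1"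
    by simp
  then show ?thesis
    unfolding i_eq_exp_integral[OF assms(1)] using i_0_pos by (simp add: mult_left_le)
qed

lemma i_ge_i_0:
  assumes "t \<ge> 0" and "\<And>u. u \<in> {0..t} \<Longrightarrow> \<alpha> \<le> K * E u"
  shows "i 0 \<le> i t"
proof -
  have "integral {0..t} (\<lambda>u. 0) \<le> integral {0..t} (\<lambda>u. K * E u - \<alpha>)"
    using assms(2) continuous_on_subset[OF continuous_on_E, of "{0..t}"]
    by (intro integral_le integrable_continuous_interval continuous_intros) auto
  then have "1 \<le> exp (integral {0..t} (\<lambda>u. K * E u - \<alpha>))"
    by simp
  then show ?thesis
    unfolding i_eq_exp_integral[OF assms(1)] using i_0_pos by (simp add: mult_le_cancel_left1)
qed

lemma i_le_i_0_if_K_le_\<alpha>: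
  assumes "K \<le> \<alpha>" and "t \<ge> 0"
  shows "i t \<le> i 0"
proof (rule i_le_i_0[OF assms(2)])
  fix u :: real assume "u \<in> {0..t}"
  then have "0 < E u" "E u \<le> 1"
    using E_pos E_le_1 by auto
  show "K * E u \<le> \<alpha>"
  proof (cases "K \<le> 0")
    case True
    then have "K * E u \<le> 0"
      using \<open>0 < E u\<close> by (simp add: mult_nonpos_nonneg)
    then show ?thesis
      using \<alpha>_pos by linarith
  next
    case False
    then have "K * E u \<le> K"
      using \<open>E u \<le> 1\<close> by (simp add: mult_left_le)
    then show ?thesis
      using assms(1) by linarith
  qed
qed

lemma i_first_integral:
  assumes "t \<ge> 0"
  shows "i t = i 0 + (K + (\<alpha> * ln (E t) - K * E t)) / \<beta>"
proof -
  define \<Phi> where "\<Phi> u = i u - (\<alpha> * ln (E u) - K * E u) / \<beta>" for u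
  have "(\<Phi> has_real_derivative 0) (at u within {0..})" if "u \<in> {0..}" for u
  proof -
    have u: "u \<ge> 0"
      using that by simp
    have "((\<lambda>x. ln (E x)) has_real_derivative 1 / E u * (- \<beta> * i u * E u)) (at u within {0..})"
      by (rule DERIV_chain2[OF DERIV_ln_divide[OF E_pos[OF u]] E_deriv[OF u]])
    then have "(\<Phi> has_real_derivative (K * E u - \<alpha>) * i u
        - (\<alpha> * (1 / E u * (- \<beta> * i u * E u)) - K * (- \<beta> * i u * E u)) / \<beta>) (at u within {0..})"
      unfolding \<Phi>_def[abs_def]
      by (intro DERIV_diff DERIV_cdivide DERIV_cmult i_deriv[OF u] E_deriv[OF u])
    moreover have "(K * E u - \<alpha>) * i u
        - (\<alpha> * (1 / E u * (- \<beta> * i u * E u)) - K * (- \<beta> * i u * E u)) / \<beta> = 0"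
      using E_pos[OF u] \<beta>_pos by (simp add: field_simps)
    ultimately show ?thesis
      by simp
  qed
  then obtain c where "\<forall>u\<in>{0..}. \<Phi> u = c"
    using has_field_derivative_zero_constant[OF convex_real_interval(1)] by blast
  then have "\<Phi> t = \<Phi> 0"
    using assms by auto
  then show ?thesis
    by (simp add: \<Phi>_def E_0 add_divide_distrib)
qed

lemma i_le_peak:
  assumes "K > 0" and "t \<ge> 0"
  shows "i t \<le> i 0 + (K - \<alpha> + \<alpha> * ln (\<alpha> / K)) / \<beta>"
proof -
  have "i t = i 0 + (K + (\<alpha> * ln (E t) - K * E t)) / \<beta>"
    by (rule i_first_integral[OF assms(2)])
  also have "\<dots> \<le> i 0 + (K + (\<alpha> * ln (\<alpha> / K) - \<alpha>)) / \<beta>"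
    using ln_minus_linear_le[OF \<alpha>_pos assms(1) E_pos[OF assms(2)]] \<beta>_pos
    by (simp add: divide_right_mono)
  finally show ?thesis
    by (simp add: algebra_simps)
qed

lemma E_attains_\<alpha>_div_K:
  assumes "\<alpha> < K"
  obtains t where "t \<ge> 0" and "E t = \<alpha> / K"
proof -
  have K_pos: "K > 0"
    using assms \<alpha>_pos by simp
  have "\<exists>t\<ge>0. E t \<le> \<alpha> / K"
  proof (rule ccontr)
    assume "\<not> ?thesis"
    then have E_gt: "\<alpha> / K < E t" if "t \<ge> 0" for t
      using that by auto
    have i_ge: "i 0 \<le> i t" if "t \<ge> 0" for t
      using E_gt K_pos
      by (intro i_ge_i_0[OF that]) (auto simp: pos_divide_less_eq mult.commute less_imp_le)
    define T where "T = ln (K / \<alpha>) / (\<beta> * i 0)"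
    have "T \<ge> 0"
      unfolding T_def using assms \<alpha>_pos \<beta>_pos i_0_pos by simp
    have "E T \<le> exp (- \<beta> * i 0 * T)"
      using i_ge \<open>T \<ge> 0\<close> by (intro E_le_exp) auto
    also have "\<dots> = \<alpha> / K"
      unfolding T_def using \<alpha>_pos \<beta>_pos i_0_pos K_pos by (simp add: exp_minus ln_div exp_diff)
    finally show False
      using E_gt[OF \<open>T \<ge> 0\<close>] by simp
  qed
  then obtain t where "t \<ge> 0" "E t \<le> \<alpha> / K"
    by blast
  moreover have "\<alpha> / K \<le> E 0"
    using assms K_pos E_0 by simp
  moreover have "continuous_on {0..t} E"
    using continuous_on_E by (rule continuous_on_subset) auto
  ultimately obtain u where "0 \<le> u" "u \<le> t" "E u = \<alpha> / K"
    using IVT2'[of E t "\<alpha> / K" 0] by auto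
  then show ?thesis
    using that by blast
qed

lemma peak_attained:
  assumes "\<alpha> < K"
  shows "\<exists>t\<ge>0. i t = i 0 + (K - \<alpha> + \<alpha> * ln (\<alpha> / K)) / \<beta>"
proof -
  obtain t where "t \<ge> 0" "E t = \<alpha> / K"
    using E_attains_\<alpha>_div_K[OF assms] .
  moreover have "K \<noteq> 0"
    using assms \<alpha>_pos by simp
  ultimately show ?thesis
    using i_first_integral[of t] by auto
qed

end

lemma asir_reduces_to_infection_escape_system:
  fixes \<beta> \<beta>\<^sub>a \<alpha> :: real and sa sr ia ir :: "real \<Rightarrow> real"
  assumes "\<beta> > 0" "\<alpha> > 0" "ia 0 + ir 0 > 0"
    and d_sa: "\<And>t. t \<ge> 0 \<Longrightarrow>
      (sa has_real_derivative (- \<beta> * sa t * (ia t + ir t))) (at t within {0..})"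
    and d_sr: "\<And>t. t \<ge> 0 \<Longrightarrow>
      (sr has_real_derivative (- \<beta> * sr t * (ia t + ir t))) (at t within {0..})"
    and d_ia: "\<And>t. t \<ge> 0 \<Longrightarrow>
      (ia has_real_derivative (\<beta> * sa t * (ia t + ir t) - \<beta>\<^sub>a * sa t * ia t - \<alpha> * ia t))
        (at t within {0..})"
    and d_ir: "\<And>t. t \<ge> 0 \<Longrightarrow>
      (ir has_real_derivative (\<beta> * sr t * (ia t + ir t) - \<beta>\<^sub>a * sa t * ir t - \<alpha> * ir t))
        (at t within {0..})"
  shows "infection_escape_system \<beta> \<alpha> (\<beta> * (sa 0 + sr 0) - \<beta>\<^sub>a * sa 0) (\<lambda>t. ia t + ir t)
    (\<lambda>t. exp (integral {0..t} (\<lambda>u. - \<beta> * (ia u + ir u))))"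
proof -
  define i where "i t = ia t + ir t" for t
  define E where "E t = exp (integral {0..t} (\<lambda>u. - \<beta> * i u))" for t
  have i_deriv_sa_sr: "(i has_real_derivative \<beta> * (sa t + sr t) * i t - \<beta>\<^sub>a * sa t * i t - \<alpha> * i t)
      (at t within {0..})" if "t \<ge> 0" for t
    unfolding i_def[abs_def] using DERIV_add[OF d_ia[OF that] d_ir[OF that]]
    by (simp add: algebra_simps)
  then have i_cont: "continuous_on {0..} (\<lambda>u. - \<beta> * i u)"
    by (intro continuous_intros DERIV_continuous_on[of _ i]) auto
  have E_deriv: "(E has_real_derivative - \<beta> * i t * E t) (at t within {0..})" if "t \<ge> 0" for t
    unfolding E_def[abs_def]
    using DERIV_chain2[OF DERIV_exp integral_has_real_derivative_atLeast[OF i_cont that]]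
    by (rule DERIV_cong) (rule mult.commute)
  have susceptible: "sa t = sa 0 * E t" "sr t = sr 0 * E t" if "t \<ge> 0" for t
  proof -
    have "(sa has_real_derivative (- \<beta> * i u) * sa u) (at u within {0..})"
      "(sr has_real_derivative (- \<beta> * i u) * sr u) (at u within {0..})" if "u \<ge> 0" for u
      using d_sa[OF that] d_sr[OF that] by (simp_all add: i_def algebra_simps)
    then show "sa t = sa 0 * E t" "sr t = sr 0 * E t"
      using linear_ode_solution i_cont \<open>t \<ge> 0\<close> unfolding E_def by metis+
  qed
  have "(i has_real_derivative ((\<beta> * (sa 0 + sr 0) - \<beta>\<^sub>a * sa 0) * E t - \<alpha>) * i t)
      (at t within {0..})" if "t \<ge> 0" for t
    using i_deriv_sa_sr[OF that] susceptible[OF that] by (simp add: algebra_simps)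
  with E_deriv show ?thesis
    using assms(1-3) unfolding i_def E_def by unfold_locales auto
qed

lemma asir_peak_level_eq:
  fixes \<beta> \<beta>\<^sub>a \<alpha> sa0 s0 i0 :: real
  assumes "\<beta> > 0" and "i0 + s0 = 1"
  defines "K \<equiv> \<beta> * s0 - \<beta>\<^sub>a * sa0"
  shows "i0 + (K - \<alpha> + \<alpha> * ln (\<alpha> / K)) / \<beta>
    = 1 - \<alpha> / \<beta> - (\<beta>\<^sub>a / \<beta>) * sa0 + (\<alpha> / \<beta>) * ln (\<alpha> / (\<beta> * s0 - \<beta>\<^sub>a * sa0))"
proof -
  have "K / \<beta> = s0 - (\<beta>\<^sub>a / \<beta>) * sa0"
    using assms(1) by (simp add: K_def field_simps)
  moreover have "(K - \<alpha> + \<alpha> * ln (\<alpha> / K)) / \<beta> = K / \<beta> - \<alpha> / \<beta> + (\<alpha> / \<beta>) * ln (\<alpha> / K)"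
    by (simp add: add_divide_distrib diff_divide_distrib)
  ultimately show ?thesis
    using assms(2) unfolding K_def by linarith
qed

theorem theorem4:
  fixes \<beta> \<beta>\<^sub>a \<alpha> :: real
    and sa sr ia ir r :: "real \<Rightarrow> real"
    and sa0 sr0 ia0 ir0 :: real
  assumes pos: "\<beta> > 0" "\<beta>\<^sub>a > 0" "\<alpha> > 0"
    and d_sa: "\<And>t. t \<ge> 0 \<Longrightarrow>
      (sa has_real_derivative (- \<beta> * sa t * (ia t + ir t))) (at t within {0..})"
    and d_sr: "\<And>t. t \<ge> 0 \<Longrightarrow>
      (sr has_real_derivative (- \<beta> * sr t * (ia t + ir t))) (at t within {0..})"
    and d_ia: "\<And>t. t \<ge> 0 \<Longrightarrow>
      (ia has_real_derivative (\<beta> * sa t * (ia t + ir t) - \<beta>\<^sub>a * sa t * ia t - \<alpha> * ia t))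
        (at t within {0..})"
    and d_ir: "\<And>t. t \<ge> 0 \<Longrightarrow>
      (ir has_real_derivative (\<beta> * sr t * (ia t + ir t) - \<beta>\<^sub>a * sa t * ir t - \<alpha> * ir t))
        (at t within {0..})"
    and d_r: "\<And>t. t \<ge> 0 \<Longrightarrow>
      (r has_real_derivative (\<beta>\<^sub>a * sa t * (ia t + ir t) + \<alpha> * (ia t + ir t)))
        (at t within {0..})"
    and init: "sa 0 = sa0" "sr 0 = sr0" "ia 0 = ia0" "ir 0 = ir0" "r 0 = 0"
    and range: "sa0 \<in> {0..1}" "sr0 \<in> {0..1}" "ia0 \<in> {0..1}" "ir0 \<in> {0..1}"
    and total: "sa0 + sr0 + ia0 + ir0 = 1"
    and nontriv: "ia0 + ir0 > 0"
  shows "let i0 = ia0 + ir0; s0 = sa0 + sr0;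
             ipk = (if sa0 < (\<beta> * s0 - \<alpha>) / \<beta>\<^sub>a
                    then 1 - \<alpha> / \<beta> - (\<beta>\<^sub>a / \<beta>) * sa0
                         + (\<alpha> / \<beta>) * ln (\<alpha> / (\<beta> * s0 - \<beta>\<^sub>a * sa0))
                    else i0)
         in (\<exists>t\<ge>0. ia t + ir t = ipk) \<and> (\<forall>t\<ge>0. ia t + ir t \<le> ipk)"
proof -
  define K where "K = \<beta> * (sa0 + sr0) - \<beta>\<^sub>a * sa0"
  interpret infection_escape_system \<beta> \<alpha> K "\<lambda>t. ia t + ir t"
    "\<lambda>t. exp (integral {0..t} (\<lambda>u. - \<beta> * (ia u + ir u)))"
    using asir_reduces_to_infection_escape_system[OF pos(1,3) _ d_sa d_sr d_ia d_ir] nontriv init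
    unfolding K_def by simp
  have "sa0 < (\<beta> * (sa0 + sr0) - \<alpha>) / \<beta>\<^sub>a \<longleftrightarrow> \<alpha> < K"
    using pos by (simp add: K_def pos_less_divide_eq algebra_simps)
  moreover have "ia0 + ir0 = ia 0 + ir 0"
    using init by simp
  moreover have "ia 0 + ir 0 + (K - \<alpha> + \<alpha> * ln (\<alpha> / K)) / \<beta>
      = 1 - \<alpha> / \<beta> - (\<beta>\<^sub>a / \<beta>) * sa0 + (\<alpha> / \<beta>) * ln (\<alpha> / (\<beta> * (sa0 + sr0) - \<beta>\<^sub>a * sa0))"
    unfolding K_def by (rule asir_peak_level_eq[OF pos(1)]) (use total init in simp)
  ultimately show ?thesis
    unfolding Let_def
    using i_le_peak peak_attained i_le_i_0_if_K_le_\<alpha> \<alpha>_pos by (cases "\<alpha> < K") auto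
qed

end
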